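(* Let $K=\mathrm{SU}(2)$ and $\mathcal{M}=\{(g_1,h_1,g_2,h_2)\in K^4:[g_1,h_1][g_2,h_2]=I\}/K$. The subset $$\{(g,h,khk^{-1},kgk^{-1})\in K^4 : [g,h]=-I,\ k^2=-I\}/K$$ of $\mathcal{M}$ is homeomorphic to $\mathbb{P}^2(\mathbb{R})$.
   Context: $[a,b]=aba^{-1}b^{-1}$; $K$ acts by simultaneous conjugation and $\mathcal{M}$ carries the quotient topology. *)

theory Defs
  imports "HOL-Analysis.Analysis"
begin

definition quotient_topology :: "'a topology \<Rightarrow> ('a \<Rightarrow> 'b) \<Rightarrow> 'b topology" where
  "quotient_topology X q =
     topology (\<lambda>U. U \<subseteq> q ` topspace X \<and> openin X {x \<in> topspace X. q x \<in> U})"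

lemma istopology_quotient:
  "istopology (\<lambda>U. U \<subseteq> q ` topspace X \<and> openin X {x \<in> topspace X. q x \<in> U})"
  unfolding istopology_def
proof (rule conjI; intro allI impI)
  fix S T assume st: "S \<subseteq> q ` topspace X \<and> openin X {x \<in> topspace X. q x \<in> S}"
    "T \<subseteq> q ` topspace X \<and> openin X {x \<in> topspace X. q x \<in> T}"
  have e: "{x \<in> topspace X. q x \<in> S \<inter> T} = {x \<in> topspace X. q x \<in> S} \<inter> {x \<in> topspace X. q x \<in> T}" by auto
  show "S \<inter> T \<subseteq> q ` topspace X \<and> openin X {x \<in> topspace X. q x \<in> S \<inter> T}"
    unfolding e using st by auto
next
  fix K assume K: "\<forall>S\<in>K. S \<subseteq> q ` topspace X \<and> openin X {x \<in> topspace X. q x \<in> S}"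
  have e: "{x \<in> topspace X. q x \<in> \<Union>K} = (\<Union>S\<in>K. {x \<in> topspace X. q x \<in> S})" by auto
  show "\<Union>K \<subseteq> q ` topspace X \<and> openin X {x \<in> topspace X. q x \<in> \<Union>K}"
    unfolding e using K by auto
qed

definition mat_adjoint :: "complex^2^2 \<Rightarrow> complex^2^2" where
  "mat_adjoint A = (\<chi> i j. cnj (A $ j $ i))"

definition SU2 :: "(complex^2^2) set" where
  "SU2 = {U. U ** mat_adjoint U = mat 1 \<and> mat_adjoint U ** U = mat 1 \<and> det U = 1}"

definition commutator :: "complex^2^2 \<Rightarrow> complex^2^2 \<Rightarrow> complex^2^2" where
  "commutator a b = a ** b ** matrix_inv a ** matrix_inv b"

type_synonym cmat = "complex^2^2"
type_synonym quad = "cmat \<times> cmat \<times> cmat \<times> cmat"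

definition conj_act :: "complex^2^2 \<Rightarrow> quad \<Rightarrow> quad" where
  "conj_act k = (\<lambda>(a, b, c, d).
     ((k ** a ** matrix_inv k, k ** b ** matrix_inv k,
      k ** c ** matrix_inv k, k ** d ** matrix_inv k) :: quad))"

definition orbit :: "quad \<Rightarrow> quad set" where
  "orbit x = {conj_act k x | k. k \<in> SU2}"

definition RepVar :: "quad set" where
  "RepVar = {(g1, h1, g2, h2). g1 \<in> SU2 \<and> h1 \<in> SU2 \<and> g2 \<in> SU2 \<and> h2 \<in> SU2 \<and>
              commutator g1 h1 ** commutator g2 h2 = mat 1}"

definition M_top :: "quad set topology" where
  "M_top = quotient_topology (subtopology euclidean RepVar) orbit"

definition S_sub :: "quad set set" where
  "S_sub = orbit ` {(g, h, k ** h ** matrix_inv k, k ** g ** matrix_inv k) | g h k.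
              g \<in> SU2 \<and> h \<in> SU2 \<and> k \<in> SU2 \<and> commutator g h = - mat 1 \<and> k ** k = - mat 1}"

definition RP2 :: "(real^3) set topology" where
  "RP2 = quotient_topology (subtopology euclidean (sphere 0 1)) (\<lambda>x. {x, - x})"

end

theory Submission
  imports Defs
begin

(* If [g,h] = -I then g and h anticommute, so both are trace-free, i.e. pure unit quaternions,
   and one simultaneous conjugation moves (g, h) to (i, j).  The condition k^2 = -I makes
   k a pure unit quaternion x as well, so the subset is the image of the sphere S^2 under
   x |-> [(i, j, x j x^-1, x i x^-1)], and x and -x have the same image.  The invariant
   traces tr(g1 h2), tr(h1 g2), tr(g1 g2), tr(g1 h2 g2), tr(h1 h2 g2) of that point are affine
   in the products x_a x_b, which determine x up to sign; as continuous functions on M that separate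
   the points of the subset, they make it Hausdorff.  The induced continuous bijection from the compact space RP^2 is
   therefore a homeomorphism. *)

lemma openin_quotient_topology:
  "openin (quotient_topology X q) U \<longleftrightarrow> U \<subseteq> q ` topspace X \<and> openin X {x \<in> topspace X. q x \<in> U}"
  unfolding quotient_topology_def by (simp add: topology_inverse'[OF istopology_quotient])

lemma topspace_quotient_topology: "topspace (quotient_topology X q) = q ` topspace X"
proof
  show "topspace (quotient_topology X q) \<subseteq> q ` topspace X"
    using openin_topspace[of "quotient_topology X q"] unfolding openin_quotient_topology by blast
  have "{x \<in> topspace X. q x \<in> q ` topspace X} = topspace X"
    by auto
  then have "openin (quotient_topology X q) (q ` topspace X)"
    by (simp add: openin_quotient_topology)
  then show "q ` topspace X \<subseteq> topspace (quotient_topology X q)"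
    by (rule openin_subset)
qed

lemma continuous_map_quotient_topology: "continuous_map X (quotient_topology X q) q"
  unfolding continuous_map_def
  by (auto simp: topspace_quotient_topology openin_quotient_topology)

lemma continuous_map_from_quotient_topology:
  assumes "continuous_map X Y (\<lambda>x. f (q x))"
  shows "continuous_map (quotient_topology X q) Y f"
  unfolding continuous_map_def
proof (intro conjI allI impI)
  show "f \<in> topspace (quotient_topology X q) \<rightarrow> topspace Y"
    using assms by (auto simp: topspace_quotient_topology continuous_map_def)
  fix V assume "openin Y V"
  moreover have "{x \<in> topspace X. q x \<in> {y \<in> q ` topspace X. f y \<in> V}} = {x \<in> topspace X. f (q x) \<in> V}"
    by auto
  ultimately show "openin (quotient_topology X q) {y \<in> topspace (quotient_topology X q). f y \<in> V}"
    using assms by (auto simp: openin_quotient_topology topspace_quotient_topology continuous_map_def)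
qed

section \<open>SU(2) as the unit quaternions\<close>

lemma matrix_mul_uminus_left: "(- A) ** (B :: 'a::ring_1^'p^'n) = - (A ** B)"
  by (simp add: matrix_matrix_mult_def vec_eq_iff sum_negf)

lemma matrix_mul_uminus_right: "A ** (- B :: 'a::ring_1^'p^'n) = - (A ** B)"
  by (simp add: matrix_matrix_mult_def vec_eq_iff sum_negf)

lemma matrix_mul_diff_left: "(A - B) ** (C :: 'a::ring_1^'p^'n) = A ** C - B ** C"
  by (simp add: matrix_matrix_mult_def vec_eq_iff sum_subtractf algebra_simps)

lemma matrix_mul_diff_right: "A ** (B - C :: 'a::ring_1^'p^'n) = A ** B - A ** C"
  by (simp add: matrix_matrix_mult_def vec_eq_iff sum_subtractf algebra_simps)

text \<open>In quaternion terms, \<open>su2_mat a b\<close> is \<open>a + b j\<close>; \<open>quat_i\<close>, \<open>quat_j\<close> below are the units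
  \<open>i\<close>, \<open>j\<close> and \<open>pure_quat x\<close> is \<open>x\<^sub>1 i + x\<^sub>2 j + x\<^sub>3 k\<close>.\<close>

definition su2_mat :: "complex \<Rightarrow> complex \<Rightarrow> cmat" where
  "su2_mat a b = (\<chi> i j. if i = 1 then (if j = 1 then a else b) else (if j = 1 then - cnj b else cnj a))"

lemma su2_mat_nth [simp]:
  "su2_mat a b $ 1 $ 1 = a" "su2_mat a b $ 1 $ 2 = b"
  "su2_mat a b $ 2 $ 1 = - cnj b" "su2_mat a b $ 2 $ 2 = cnj a"
  by (simp_all add: su2_mat_def)

lemma cmat_eq_iff: "(A::cmat) = B \<longleftrightarrow> A$1$1 = B$1$1 \<and> A$1$2 = B$1$2 \<and> A$2$1 = B$2$1 \<and> A$2$2 = B$2$2"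
  by (auto simp: vec_eq_iff forall_2)

lemma su2_mat_eq_iff [simp]: "su2_mat a b = su2_mat c d \<longleftrightarrow> a = c \<and> b = d"
  by (auto simp: cmat_eq_iff)

lemma su2_mat_mult: "su2_mat a b ** su2_mat c d = su2_mat (a * c - b * cnj d) (a * d + b * cnj c)"
  by (simp add: cmat_eq_iff matrix_matrix_mult_def sum_2 algebra_simps)

lemma mat_1_eq_su2_mat: "mat 1 = su2_mat 1 0"
  by (simp add: cmat_eq_iff mat_def)

lemma uminus_su2_mat: "- su2_mat a b = su2_mat (- a) (- b)"
  by (simp add: cmat_eq_iff)

lemma diff_su2_mat: "su2_mat a b - su2_mat c d = su2_mat (a - c) (b - d)"
  by (simp add: cmat_eq_iff)

lemma scaleR_su2_mat: "r *\<^sub>R su2_mat a b = su2_mat (of_real r * a) (of_real r * b)"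
  by (simp add: cmat_eq_iff) (simp add: scaleR_conv_of_real)

lemma mat_adjoint_su2_mat: "mat_adjoint (su2_mat a b) = su2_mat (cnj a) (- b)"
  by (simp add: cmat_eq_iff mat_adjoint_def)

lemma det_su2_mat: "det (su2_mat a b) = a * cnj a + b * cnj b"
  by (simp add: det_2)

lemma trace_su2_mat: "trace (su2_mat a b) = a + cnj a"
  by (simp add: trace_def sum_2)

lemma mat_adjoint_mult: "mat_adjoint (A ** B) = mat_adjoint B ** mat_adjoint A"
  by (simp add: cmat_eq_iff matrix_matrix_mult_def sum_2 mat_adjoint_def algebra_simps)

lemma mat_adjoint_mat_adjoint [simp]: "mat_adjoint (mat_adjoint A) = A"
  by (simp add: cmat_eq_iff mat_adjoint_def)

lemma mat_adjoint_mat_1: "mat_adjoint (mat 1) = mat 1"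
  by (simp add: cmat_eq_iff mat_adjoint_def mat_def)

lemma mat_adjoint_uminus: "mat_adjoint (- A) = - mat_adjoint A"
  by (simp add: cmat_eq_iff mat_adjoint_def)

lemma trace_uminus: "trace (- (A :: 'a::ring_1^'n^'n)) = - trace A"
  by (simp add: trace_def sum_negf)

lemma SU2_su2_mat_iff: "su2_mat a b \<in> SU2 \<longleftrightarrow> a * cnj a + b * cnj b = 1"
  by (auto simp: SU2_def mat_adjoint_su2_mat su2_mat_mult mat_1_eq_su2_mat det_su2_mat algebra_simps)

text \<open>Unitarity forces the cofactor matrix to be the adjoint, which gives the second row.\<close>

lemma SU2_eq_su2_mat:
  assumes "U \<in> SU2"
  shows "U = su2_mat (U$1$1) (U$1$2)"
proof -
  define V :: cmat where
    "V = (\<chi> i j. if i = 1 then (if j = 1 then U$2$2 else - U$1$2) else (if j = 1 then - U$2$1 else U$1$1))"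
  have "U$1$1 * U$2$2 - U$1$2 * U$2$1 = 1"
    using assms by (simp add: SU2_def det_2)
  then have "U ** V = mat 1"
    by (simp add: cmat_eq_iff matrix_matrix_mult_def sum_2 mat_def V_def algebra_simps)
  then have "mat_adjoint U = (mat_adjoint U ** U) ** V"
    by (simp add: matrix_mul_assoc[symmetric])
  also have "\<dots> = V"
    using assms by (simp add: SU2_def)
  finally have "cnj (U$1$1) = U$2$2" "cnj (U$2$1) = - U$1$2"
    by (simp_all add: cmat_eq_iff mat_adjoint_def V_def)
  then show ?thesis
    by (simp add: cmat_eq_iff) (metis complex_cnj_cnj complex_cnj_minus)
qed

lemma SU2_obtain:
  assumes "U \<in> SU2"
  obtains a b where "U = su2_mat a b" "a * cnj a + b * cnj b = 1"
  using SU2_eq_su2_mat[OF assms] assms by (metis SU2_su2_mat_iff)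

lemma su2_mat_normalise:
  assumes "su2_mat a b \<noteq> 0"
  obtains c :: real where "c *\<^sub>R su2_mat a b \<in> SU2"
proof
  define n where "n = (cmod a)\<^sup>2 + (cmod b)\<^sup>2"
  have "n > 0"
    using assms by (auto simp: n_def cmat_eq_iff add_pos_nonneg add_nonneg_pos)
  define c where "c = 1 / sqrt n"
  have "of_real c * a * cnj (of_real c * a) + of_real c * b * cnj (of_real c * b)
      = of_real (c * c) * (a * cnj a + b * cnj b)"
    by (simp add: algebra_simps)
  also have "\<dots> = of_real (c * c * n)"
    by (simp add: n_def complex_norm_square[symmetric] algebra_simps)
  also have "\<dots> = 1"
    using \<open>n > 0\<close> by (simp add: c_def)
  finally show "c *\<^sub>R su2_mat a b \<in> SU2"
    by (simp add: scaleR_su2_mat SU2_su2_mat_iff)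
qed

lemma SU2_mult_adjoint: "U \<in> SU2 \<Longrightarrow> U ** mat_adjoint U = mat 1"
  and SU2_adjoint_mult: "U \<in> SU2 \<Longrightarrow> mat_adjoint U ** U = mat 1"
  by (simp_all add: SU2_def)

lemma SU2_matrix_inv:
  assumes "U \<in> SU2"
  shows "matrix_inv U = mat_adjoint U"
proof -
  have "\<exists>A'. U ** A' = mat 1 \<and> A' ** U = mat 1"
    using assms SU2_def by blast
  then have "U ** matrix_inv U = mat 1"
    unfolding matrix_inv_def by (rule someI_ex[THEN conjunct1])
  then have "matrix_inv U = (mat_adjoint U ** U) ** matrix_inv U"
    using assms by (simp add: SU2_adjoint_mult)
  also have "\<dots> = mat_adjoint U"
    by (simp add: \<open>U ** matrix_inv U = mat 1\<close> flip: matrix_mul_assoc)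
  finally show ?thesis .
qed

lemma SU2_mat_1: "mat 1 \<in> SU2"
  by (simp add: mat_1_eq_su2_mat SU2_su2_mat_iff)

lemma SU2_mult:
  assumes "U \<in> SU2" "V \<in> SU2"
  shows "U ** V \<in> SU2"
proof -
  have "U ** V ** mat_adjoint (U ** V) = U ** (V ** mat_adjoint V) ** mat_adjoint U"
    "mat_adjoint (U ** V) ** (U ** V) = mat_adjoint V ** (mat_adjoint U ** U) ** V"
    by (simp_all only: mat_adjoint_mult matrix_mul_assoc)
  moreover have "det (U ** V) = 1"
    using assms by (simp add: SU2_def det_mul)
  ultimately show ?thesis
    using assms by (simp add: SU2_def)
qed

lemma SU2_mat_adjoint: "U \<in> SU2 \<Longrightarrow> mat_adjoint U \<in> SU2"
  by (elim SU2_obtain) (auto simp: mat_adjoint_su2_mat SU2_su2_mat_iff algebra_simps)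

definition su2_conj :: "cmat \<Rightarrow> cmat \<Rightarrow> cmat" where
  "su2_conj k A = k ** A ** mat_adjoint k"

lemma su2_conj_eq_matrix_inv: "k \<in> SU2 \<Longrightarrow> su2_conj k A = k ** A ** matrix_inv k"
  by (simp add: su2_conj_def SU2_matrix_inv)

lemma su2_conj_mult: "k \<in> SU2 \<Longrightarrow> su2_conj k (A ** B) = su2_conj k A ** su2_conj k B"
  unfolding su2_conj_def by (metis SU2_adjoint_mult matrix_mul_assoc matrix_mul_rid)

lemma su2_conj_su2_conj: "su2_conj k (su2_conj l A) = su2_conj (k ** l) A"
  by (simp add: su2_conj_def mat_adjoint_mult matrix_mul_assoc)

lemma su2_conj_mat_1: "k \<in> SU2 \<Longrightarrow> su2_conj k (mat 1) = mat 1"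
  by (simp add: su2_conj_def SU2_mult_adjoint)

lemma su2_conj_uminus: "su2_conj k (- A) = - su2_conj k A"
  by (simp add: su2_conj_def matrix_mul_uminus_left matrix_mul_uminus_right)

lemma su2_conj_uminus_left: "su2_conj (- k) A = su2_conj k A"
  by (simp add: su2_conj_def matrix_mul_uminus_left matrix_mul_uminus_right mat_adjoint_uminus)

lemma mat_adjoint_su2_conj: "mat_adjoint (su2_conj k A) = su2_conj k (mat_adjoint A)"
  by (simp add: su2_conj_def mat_adjoint_mult matrix_mul_assoc)

lemma trace_su2_conj: "k \<in> SU2 \<Longrightarrow> trace (su2_conj k A) = trace A"
  by (simp add: su2_conj_def trace_mul_sym[of "k ** A"] matrix_mul_assoc SU2_adjoint_mult)

lemma SU2_su2_conj: "k \<in> SU2 \<Longrightarrow> A \<in> SU2 \<Longrightarrow> su2_conj k A \<in> SU2"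
  by (simp add: su2_conj_def SU2_mult SU2_mat_adjoint)

lemma su2_conj_conjugate:
  "u \<in> SU2 \<Longrightarrow> su2_conj u (su2_conj k A) = su2_conj (su2_conj u k) (su2_conj u A)"
  unfolding su2_conj_def[of k] su2_conj_def[of "su2_conj u k"]
  by (simp add: su2_conj_mult mat_adjoint_su2_conj)

lemma conj_act_eq_su2_conj:
  "k \<in> SU2 \<Longrightarrow> conj_act k (a, b, c, d) = (su2_conj k a, su2_conj k b, su2_conj k c, su2_conj k d)"
  by (simp add: conj_act_def su2_conj_eq_matrix_inv)

lemma orbit_self: "z \<in> orbit z"
proof -
  have "conj_act (mat 1) z = z"
    by (cases z) (simp add: conj_act_eq_su2_conj SU2_mat_1 su2_conj_def mat_adjoint_mat_1)
  then show ?thesis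
    unfolding orbit_def using SU2_mat_1 by force
qed

lemma orbit_conj_act:
  assumes "u \<in> SU2"
  shows "orbit (conj_act u z) = orbit z"
proof -
  have comp: "conj_act k (conj_act l z) = conj_act (k ** l) z" if "k \<in> SU2" "l \<in> SU2" for k l z
    using that by (cases z) (simp add: conj_act_eq_su2_conj SU2_mult su2_conj_su2_conj)
  have "conj_act k z = conj_act (k ** mat_adjoint u) (conj_act u z)" if "k \<in> SU2" for k
  proof -
    have "k ** mat_adjoint u ** u = k"
      using assms by (simp add: SU2_adjoint_mult flip: matrix_mul_assoc)
    then show ?thesis
      using comp[of "k ** mat_adjoint u" u z] that assms by (simp add: SU2_mult SU2_mat_adjoint)
  qed
  then show ?thesis
    unfolding orbit_def using assms comp SU2_mult SU2_mat_adjoint by blast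
qed

section \<open>Pairs with commutator -I\<close>

lemma commutator_SU2: "g \<in> SU2 \<Longrightarrow> h \<in> SU2 \<Longrightarrow> commutator g h = g ** h ** mat_adjoint g ** mat_adjoint h"
  by (simp add: commutator_def SU2_matrix_inv)

lemma commutator_eq_neg_1_imp_anticommute:
  assumes g: "g \<in> SU2" and h: "h \<in> SU2" and c: "commutator g h = - mat 1"
  shows "g ** h = - (h ** g)"
proof -
  have "g ** h = g ** h ** (mat_adjoint g ** (mat_adjoint h ** h) ** g)"
    using g h by (simp add: SU2_adjoint_mult)
  also have "\<dots> = commutator g h ** (h ** g)"
    using g h by (simp add: commutator_SU2 matrix_mul_assoc)
  also have "\<dots> = - (h ** g)"
    by (simp add: c matrix_mul_uminus_left)
  finally show ?thesis .
qed

lemma anticommute_imp_trace_eq_0: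
  assumes h: "h \<in> SU2" and gh: "g ** h = - (h ** g)"
  shows "trace g = 0"
proof -
  have "g = g ** h ** mat_adjoint h"
    using h by (simp add: SU2_mult_adjoint flip: matrix_mul_assoc)
  also have "\<dots> = - su2_conj h g"
    by (simp add: gh su2_conj_def matrix_mul_uminus_left)
  finally have "trace g = - trace g"
    using h by (metis trace_su2_conj trace_uminus)
  then show ?thesis
    by simp
qed

lemma SU2_square_eq_neg_1_iff:
  assumes "U \<in> SU2"
  shows "U ** U = - mat 1 \<longleftrightarrow> trace U = 0"
proof -
  obtain a b where U: "U = su2_mat a b" and ab: "a * cnj a + b * cnj b = 1"
    using SU2_obtain[OF assms] .
  have "U ** U = - mat 1 \<longleftrightarrow> a * a - b * cnj b = -1 \<and> b * (a + cnj a) = 0"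
    by (simp add: U su2_mat_mult mat_1_eq_su2_mat uminus_su2_mat algebra_simps)
  also have "a * a - b * cnj b = -1 \<longleftrightarrow> a * (a + cnj a) = 0"
    using ab by algebra
  also have "a * (a + cnj a) = 0 \<and> b * (a + cnj a) = 0 \<longleftrightarrow> a + cnj a = 0"
    using ab by auto
  finally show ?thesis
    by (simp add: U trace_su2_mat)
qed

text \<open>The witness is the normalisation of \<open>1 - q p\<close>: it intertwines \<open>p\<close> and \<open>q\<close> and commutes
  with everything anticommuting with both.\<close>

lemma trace_free_conjugate_fixing:
  assumes p: "p \<in> SU2" "trace p = 0" and q: "q \<in> SU2" "trace q = 0" and "p \<noteq> - q"
  shows "\<exists>u\<in>SU2. su2_conj u p = q \<and>
           (\<forall>r. r ** p = - (p ** r) \<longrightarrow> r ** q = - (q ** r) \<longrightarrow> su2_conj u r = r)"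
proof -
  have pp: "p ** p = - mat 1" and qq: "q ** q = - mat 1"
    using p q SU2_square_eq_neg_1_iff by blast+
  define w where "w = mat 1 - q ** p"
  have "w ** p = p + q"
    by (simp add: w_def matrix_mul_diff_left pp matrix_mul_uminus_right flip: matrix_mul_assoc)
  also have "\<dots> = q ** w"
    by (simp add: w_def matrix_mul_diff_right matrix_mul_assoc qq matrix_mul_uminus_left)
  finally have wp: "w ** p = q ** w" .
  have wr: "r ** w = w ** r" if "r ** p = - (p ** r)" "r ** q = - (q ** r)" for r
  proof -
    have "r ** (q ** p) = - (q ** (r ** p))"
      using that(2) by (simp add: matrix_mul_assoc matrix_mul_uminus_left)
    also have "\<dots> = q ** p ** r"
      using that(1) by (simp add: matrix_mul_uminus_right matrix_mul_assoc)
    finally show ?thesis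
      by (simp add: w_def matrix_mul_diff_left matrix_mul_diff_right)
  qed
  obtain p1 p2 where P: "p = su2_mat p1 p2" using SU2_obtain p by blast
  obtain q1 q2 where Q: "q = su2_mat q1 q2" using SU2_obtain q by blast
  have W: "w = su2_mat (1 - (q1 * p1 - q2 * cnj p2)) (- (q1 * p2 + q2 * cnj p1))"
    by (simp add: w_def P Q su2_mat_mult mat_1_eq_su2_mat diff_su2_mat)
  have "w \<noteq> 0"
  proof
    assume "w = 0"
    then have "q ** p = mat 1" by (simp add: w_def)
    have "p = - ((q ** q) ** p)"
      by (simp add: qq matrix_mul_uminus_left)
    also have "\<dots> = - q"
      by (simp add: \<open>q ** p = mat 1\<close> flip: matrix_mul_assoc)
    finally show False using \<open>p \<noteq> - q\<close> by simp
  qed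
  then obtain c where "c *\<^sub>R w \<in> SU2"
    unfolding W by (rule su2_mat_normalise)
  define u where "u = c *\<^sub>R w"
  have "u \<in> SU2"
    using \<open>c *\<^sub>R w \<in> SU2\<close> by (simp add: u_def)
  have conj_eq: "su2_conj u a = b" if "u ** a = b ** u" for a b
    using \<open>u \<in> SU2\<close> by (simp add: su2_conj_def that SU2_mult_adjoint flip: matrix_mul_assoc)
  have "u ** p = q ** u"
    by (simp add: u_def wp matrix_scalar_ac flip: scalar_matrix_assoc)
  moreover have "u ** r = r ** u" if "r ** p = - (p ** r)" "r ** q = - (q ** r)" for r
    by (simp add: u_def wr[OF that] matrix_scalar_ac flip: scalar_matrix_assoc)
  ultimately show ?thesis
    using \<open>u \<in> SU2\<close> conj_eq by blast
qed

definition quat_i :: cmat where "quat_i = su2_mat \<i> 0"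
definition quat_j :: cmat where "quat_j = su2_mat 0 1"

lemma quat_i_SU2: "quat_i \<in> SU2" and quat_j_SU2: "quat_j \<in> SU2"
  by (simp_all add: quat_i_def quat_j_def SU2_su2_mat_iff)

lemma trace_quat_i: "trace quat_i = 0" and trace_quat_j: "trace quat_j = 0"
  by (simp_all add: quat_i_def quat_j_def trace_su2_mat)

lemma quat_i_quat_j_anticommute: "quat_i ** quat_j = - (quat_j ** quat_i)"
  by (simp add: quat_i_def quat_j_def su2_mat_mult uminus_su2_mat)

lemma commutator_quat_i_quat_j: "commutator quat_i quat_j = - mat 1"
  by (simp add: commutator_SU2 quat_i_SU2 quat_j_SU2)
     (simp add: quat_i_def quat_j_def su2_mat_mult mat_adjoint_su2_mat uminus_su2_mat mat_1_eq_su2_mat)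

lemma anticommuting_normal_form:
  assumes g: "g \<in> SU2" and h: "h \<in> SU2" and "commutator g h = - mat 1"
  shows "\<exists>u\<in>SU2. su2_conj u g = quat_i \<and> su2_conj u h = quat_j"
proof -
  have gh: "g ** h = - (h ** g)"
    using commutator_eq_neg_1_imp_anticommute[OF assms] .
  then have hg: "h ** g = - (g ** h)"
    by simp
  obtain u1 where u1: "u1 \<in> SU2" "su2_conj u1 g = quat_i"
  proof (cases "g = - quat_i")
    case True
    then show ?thesis
      using that[of quat_j] quat_j_SU2
      by (simp add: su2_conj_def quat_i_def quat_j_def su2_mat_mult uminus_su2_mat mat_adjoint_su2_mat)
  next
    case False
    then show ?thesis
      using that trace_free_conjugate_fixing[OF g anticommute_imp_trace_eq_0[OF h gh] quat_i_SU2 trace_quat_i]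
      by blast
  qed
  define h1 where "h1 = su2_conj u1 h"
  have h1: "h1 \<in> SU2" "trace h1 = 0"
    using u1 h anticommute_imp_trace_eq_0[OF g hg] by (simp_all add: h1_def SU2_su2_conj trace_su2_conj)
  have "quat_i ** h1 = su2_conj u1 (g ** h)"
    using u1 by (simp add: h1_def su2_conj_mult)
  also have "\<dots> = - (h1 ** quat_i)"
    using u1 by (simp add: h1_def gh su2_conj_uminus su2_conj_mult)
  finally have ih1: "quat_i ** h1 = - (h1 ** quat_i)" .
  then obtain u2 where u2: "u2 \<in> SU2" "su2_conj u2 h1 = quat_j" "su2_conj u2 quat_i = quat_i"
  proof (cases "h1 = - quat_j")
    case True
    then show ?thesis
      using that[of quat_i] quat_i_SU2
      by (simp add: su2_conj_def quat_i_def quat_j_def su2_mat_mult uminus_su2_mat mat_adjoint_su2_mat)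
  next
    case False
    then show ?thesis
      using that trace_free_conjugate_fixing[OF h1 quat_j_SU2 trace_quat_j] ih1 quat_i_quat_j_anticommute
      by blast
  qed
  show ?thesis
    using u1 u2 by (intro bexI[of _ "u2 ** u1"]) (simp_all add: SU2_mult flip: su2_conj_su2_conj h1_def)
qed

section \<open>Parametrising the subset by the sphere\<close>

definition pure_quat :: "real^3 \<Rightarrow> cmat" where
  "pure_quat x = su2_mat (Complex 0 (x$1)) (Complex (x$2) (x$3))"

lemma mem_sphere_3_iff: "(x::real^3) \<in> sphere 0 1 \<longleftrightarrow> x$1 * x$1 + x$2 * x$2 + x$3 * x$3 = 1"
proof -
  have "x \<in> sphere 0 1 \<longleftrightarrow> x$1^2 + x$2^2 + x$3^2 = 1"
    by (simp add: norm_eq_1 inner_vec_def sum_3 power2_eq_square)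
  then show ?thesis
    by (simp only: power2_eq_square)
qed

lemma pure_quat_SU2: "x \<in> sphere 0 1 \<Longrightarrow> pure_quat x \<in> SU2"
  unfolding mem_sphere_3_iff by (simp add: pure_quat_def SU2_su2_mat_iff complex_eq_iff)

lemma trace_pure_quat: "trace (pure_quat x) = 0"
  by (simp add: pure_quat_def trace_su2_mat complex_eq_iff)

lemma pure_quat_uminus: "pure_quat (- x) = - pure_quat x"
  by (simp add: pure_quat_def uminus_su2_mat complex_eq_iff)

lemma SU2_trace_eq_0_imp_pure_quat:
  assumes "k \<in> SU2" "trace k = 0"
  shows "\<exists>x\<in>sphere 0 1. pure_quat x = k"
proof -
  obtain a b where k: "k = su2_mat a b" and ab: "a * cnj a + b * cnj b = 1"
    using SU2_obtain[OF assms(1)] .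
  have "Re a = 0"
    using assms(2) by (simp add: k trace_su2_mat complex_eq_iff)
  define x :: "real^3" where "x = vector [Im a, Re b, Im b]"
  have "pure_quat x = k"
    using \<open>Re a = 0\<close> by (simp add: pure_quat_def x_def k complex_eq_iff)
  moreover have "x \<in> sphere 0 1"
    using ab \<open>Re a = 0\<close> unfolding mem_sphere_3_iff by (simp add: x_def complex_eq_iff)
  ultimately show ?thesis
    by blast
qed

definition S_point :: "real^3 \<Rightarrow> quad" where
  "S_point x = (quat_i, quat_j, su2_conj (pure_quat x) quat_j, su2_conj (pure_quat x) quat_i)"

definition S_param :: "real^3 \<Rightarrow> quad set" where
  "S_param x = orbit (S_point x)"

lemma S_param_uminus: "S_param (- x) = S_param x"
  by (simp add: S_param_def S_point_def pure_quat_uminus su2_conj_uminus_left)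

lemma anticommuting_quad_in_RepVar:
  assumes g: "g \<in> SU2" and h: "h \<in> SU2" and k: "k \<in> SU2" and c: "commutator g h = - mat 1"
  shows "(g, h, su2_conj k h, su2_conj k g) \<in> RepVar"
proof -
  have "commutator h g = mat_adjoint (commutator g h)"
    using g h by (simp add: commutator_SU2 mat_adjoint_mult matrix_mul_assoc)
  then have "commutator (su2_conj k h) (su2_conj k g) = - mat 1"
    using g h k c by (simp add: commutator_SU2 SU2_su2_conj mat_adjoint_su2_conj su2_conj_mult
        mat_adjoint_uminus mat_adjoint_mat_1 su2_conj_uminus su2_conj_mat_1 flip: su2_conj_mult)
  then show ?thesis
    using g h k c by (simp add: RepVar_def SU2_su2_conj matrix_mul_uminus_left matrix_mul_uminus_right)
qed

lemma S_point_in_RepVar: "x \<in> sphere 0 1 \<Longrightarrow> S_point x \<in> RepVar"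
  by (simp add: S_point_def anticommuting_quad_in_RepVar quat_i_SU2 quat_j_SU2 pure_quat_SU2
      commutator_quat_i_quat_j)

lemma S_sub_eq_image_S_param: "S_sub = S_param ` sphere 0 1"
proof
  show "S_param ` sphere 0 1 \<subseteq> S_sub"
  proof
    fix C assume "C \<in> S_param ` sphere 0 1"
    then obtain x where x: "x \<in> sphere 0 1" and C: "C = S_param x"
      by blast
    have "pure_quat x ** pure_quat x = - mat 1"
      using x by (simp add: SU2_square_eq_neg_1_iff pure_quat_SU2 trace_pure_quat)
    then show "C \<in> S_sub"
      unfolding S_sub_def C S_param_def S_point_def
      using x quat_i_SU2 quat_j_SU2 pure_quat_SU2 commutator_quat_i_quat_j
      by (force simp: su2_conj_eq_matrix_inv)
  qed
  show "S_sub \<subseteq> S_param ` sphere 0 1"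
  proof
    fix C assume "C \<in> S_sub"
    then obtain g h k where gh: "g \<in> SU2" "h \<in> SU2" "commutator g h = - mat 1"
      and k: "k \<in> SU2" "k ** k = - mat 1"
      and C: "C = orbit (g, h, su2_conj k h, su2_conj k g)"
      unfolding S_sub_def by (auto simp: su2_conj_eq_matrix_inv)
    obtain u where u: "u \<in> SU2" "su2_conj u g = quat_i" "su2_conj u h = quat_j"
      using anticommuting_normal_form[OF gh] by blast
    have "su2_conj u k ** su2_conj u k = - mat 1"
      using u k by (simp add: su2_conj_uminus su2_conj_mat_1 flip: su2_conj_mult)
    then obtain x where x: "x \<in> sphere 0 1" "pure_quat x = su2_conj u k"
      using SU2_trace_eq_0_imp_pure_quat SU2_square_eq_neg_1_iff SU2_su2_conj u k by metis
    have "C = orbit (conj_act u (g, h, su2_conj k h, su2_conj k g))"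
      using C orbit_conj_act[OF u(1)] by simp
    also have "conj_act u (g, h, su2_conj k h, su2_conj k g) = S_point x"
      using u x by (simp add: conj_act_eq_su2_conj S_point_def su2_conj_conjugate)
    finally have "C = S_param x"
      by (simp add: S_param_def)
    then show "C \<in> S_param ` sphere 0 1"
      using x by blast
  qed
qed

section \<open>Conjugation-invariant traces\<close>

definition trace_invariants :: "quad \<Rightarrow> real \<times> real \<times> real \<times> real \<times> real" where
  "trace_invariants = (\<lambda>(a, b, c, d). (Re (trace (a ** d)), Re (trace (b ** c)), Re (trace (a ** c)),
     Re (trace (a ** d ** c)), Re (trace (b ** d ** c))))"

lemma trace_invariants_conj_act: "u \<in> SU2 \<Longrightarrow> trace_invariants (conj_act u z) = trace_invariants z"
  by (cases z) (simp add: trace_invariants_def conj_act_eq_su2_conj trace_su2_conj flip: su2_conj_mult)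

lemma trace_invariants_S_point:
  assumes "x \<in> sphere 0 1"
  shows "trace_invariants (S_point x) = (2 - 4 * x$1 * x$1, 2 - 4 * x$2 * x$2, - 4 * x$1 * x$2,
           - 4 * x$1 * x$3, - 4 * x$2 * x$3)"
proof -
  have "x$1 * x$1 = 1 - x$2 * x$2 - x$3 * x$3"
    using assms unfolding mem_sphere_3_iff by simp
  then show ?thesis
    by (simp add: trace_invariants_def S_point_def pure_quat_def quat_i_def quat_j_def su2_conj_def
        su2_mat_mult mat_adjoint_su2_mat trace_su2_mat) algebra
qed

lemma products_eq_imp_eq_or_neg:
  fixes x y :: "real^'n"
  assumes "\<And>i j. x$i * x$j = y$i * y$j"
  shows "y = x \<or> y = - x"
proof (cases "x = 0")
  case True
  then show ?thesis
    using assms[of i i for i] by (simp add: vec_eq_iff)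
next
  case False
  then obtain i where "x$i \<noteq> 0"
    by (auto simp: vec_eq_iff)
  moreover have "y$i = x$i \<or> y$i = - x$i"
    using assms[of i i] by (metis minus_mult_minus square_eq_iff)
  ultimately have "\<exists>s\<in>{1, -1}. y$i = s * x$i \<and> s \<noteq> 0"
    by auto
  then obtain s where s: "s \<in> {1, -1}" "y$i = s * x$i"
    by blast
  have "y$j = s * x$j" for j
    using assms[of i j] s \<open>x$i \<noteq> 0\<close> by auto
  then show ?thesis
    using s by (auto simp: vec_eq_iff)
qed

lemma S_point_trace_invariants_eq_imp:
  assumes x: "x \<in> sphere 0 1" and y: "y \<in> sphere 0 1"
    and "trace_invariants (S_point x) = trace_invariants (S_point y)"
  shows "y = x \<or> y = - x"
proof (rule products_eq_imp_eq_or_neg)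
  have "x$1 * x$1 = y$1 * y$1" "x$2 * x$2 = y$2 * y$2" "x$1 * x$2 = y$1 * y$2"
    "x$1 * x$3 = y$1 * y$3" "x$2 * x$3 = y$2 * y$3"
    using assms(3) by (simp_all add: trace_invariants_S_point[OF x] trace_invariants_S_point[OF y])
  moreover have "x$3 * x$3 = y$3 * y$3"
    using x y calculation unfolding mem_sphere_3_iff by linarith
  ultimately show "x$i * x$j = y$i * y$j" for i j
    using exhaust_3[of i] exhaust_3[of j] by (auto simp: mult.commute)
qed

definition orbit_invariants :: "quad set \<Rightarrow> real \<times> real \<times> real \<times> real \<times> real" where
  "orbit_invariants C = trace_invariants (SOME z. z \<in> C)"

lemma orbit_invariants_orbit: "orbit_invariants (orbit z) = trace_invariants z"
proof -
  have "(SOME z'. z' \<in> orbit z) \<in> orbit z"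
    using orbit_self by (rule someI)
  then obtain u where "u \<in> SU2" "(SOME z'. z' \<in> orbit z) = conj_act u z"
    unfolding orbit_def by blast
  then show ?thesis
    by (simp add: orbit_invariants_def trace_invariants_conj_act)
qed

lemma S_param_eq_iff:
  assumes "x \<in> sphere 0 1" "y \<in> sphere 0 1"
  shows "S_param x = S_param y \<longleftrightarrow> y = x \<or> y = - x"
  using S_point_trace_invariants_eq_imp[OF assms] orbit_invariants_orbit S_param_uminus
  by (metis S_param_def)

lemma inj_on_orbit_invariants_S_sub: "inj_on orbit_invariants S_sub"
proof (rule inj_onI)
  fix C D assume "C \<in> S_sub" "D \<in> S_sub" "orbit_invariants C = orbit_invariants D"
  then obtain x y where "x \<in> sphere 0 1" "y \<in> sphere 0 1" "C = S_param x" "D = S_param y"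
    and "trace_invariants (S_point x) = trace_invariants (S_point y)"
    by (auto simp: S_sub_eq_image_S_param S_param_def orbit_invariants_orbit)
  then show "C = D"
    using S_point_trace_invariants_eq_imp S_param_uminus by metis
qed

lemma continuous_on_matrix_mult [continuous_intros]:
  fixes f :: "'a::topological_space \<Rightarrow> 'b::real_normed_algebra_1^'n^'m" and g :: "'a \<Rightarrow> 'b^'p^'n"
  shows "continuous_on S f \<Longrightarrow> continuous_on S g \<Longrightarrow> continuous_on S (\<lambda>x. f x ** g x)"
  unfolding matrix_matrix_mult_def by (intro continuous_intros)

lemma continuous_on_trace [continuous_intros]:
  fixes f :: "'a::topological_space \<Rightarrow> 'b::real_normed_algebra_1^'n^'n"
  shows "continuous_on S f \<Longrightarrow> continuous_on S (\<lambda>x. trace (f x))"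
  unfolding trace_def by (intro continuous_intros)

lemma continuous_on_mat_adjoint [continuous_intros]:
  "continuous_on S f \<Longrightarrow> continuous_on S (\<lambda>x. mat_adjoint (f x))"
  unfolding mat_adjoint_def by (intro continuous_intros)

lemma continuous_on_su2_mat [continuous_intros]:
  "continuous_on S f \<Longrightarrow> continuous_on S g \<Longrightarrow> continuous_on S (\<lambda>x. su2_mat (f x) (g x))"
  unfolding su2_mat_def
  by (intro continuous_on_vec_lambda, case_tac "i = 1"; case_tac "j = 1") (auto intro: continuous_intros)

lemma continuous_on_pure_quat: "continuous_on S pure_quat"
  unfolding pure_quat_def Complex_eq by (intro continuous_intros)

lemma continuous_on_S_point: "continuous_on S S_point"
  unfolding S_point_def su2_conj_def
  by (intro continuous_intros continuous_on_compose2[OF continuous_on_pure_quat]) auto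

lemma continuous_on_trace_invariants: "continuous_on S trace_invariants"
proof -
  have eq: "trace_invariants = (\<lambda>z. (Re (trace (fst z ** snd (snd (snd z)))),
      Re (trace (fst (snd z) ** fst (snd (snd z)))), Re (trace (fst z ** fst (snd (snd z)))),
      Re (trace (fst z ** snd (snd (snd z)) ** fst (snd (snd z)))),
      Re (trace (fst (snd z) ** snd (snd (snd z)) ** fst (snd (snd z))))))"
    by (rule ext) (simp add: trace_invariants_def split: prod.split)
  show ?thesis
    unfolding eq by (intro continuous_intros)
qed

lemma topspace_M_top: "topspace M_top = orbit ` RepVar"
  by (simp add: M_top_def topspace_quotient_topology)

lemma topspace_subtopology_S_sub: "topspace (subtopology M_top S_sub) = S_sub"
  using S_point_in_RepVar
  by (auto simp: topspace_M_top S_sub_eq_image_S_param S_param_def)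

lemma continuous_map_S_param: "continuous_map (top_of_set (sphere 0 1)) (subtopology M_top S_sub) S_param"
proof -
  have "continuous_map (top_of_set (sphere 0 1)) (top_of_set RepVar) S_point"
    using continuous_on_S_point S_point_in_RepVar by auto
  then have "continuous_map (top_of_set (sphere 0 1)) M_top (orbit \<circ> S_point)"
    unfolding M_top_def by (rule continuous_map_compose[OF _ continuous_map_quotient_topology])
  then have "continuous_map (top_of_set (sphere 0 1)) M_top S_param"
    by (simp add: S_param_def[abs_def] comp_def)
  then show ?thesis
    by (rule continuous_map_into_subtopology) (auto simp: S_sub_eq_image_S_param)
qed

lemma continuous_map_orbit_invariants: "continuous_map M_top euclidean orbit_invariants"
  unfolding M_top_def
  by (rule continuous_map_from_quotient_topology)
     (simp add: orbit_invariants_orbit continuous_on_trace_invariants)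

lemma Hausdorff_space_S_sub: "Hausdorff_space (subtopology M_top S_sub)"
proof (rule Hausdorff_space_injective_preimage)
  show "Hausdorff_space (euclidean :: (real \<times> real \<times> real \<times> real \<times> real) topology)"
    by simp
  show "continuous_map (subtopology M_top S_sub) euclidean orbit_invariants"
    by (rule continuous_map_from_subtopology[OF continuous_map_orbit_invariants])
  show "inj_on orbit_invariants (topspace (subtopology M_top S_sub))"
    unfolding topspace_subtopology_S_sub by (rule inj_on_orbit_invariants_S_sub)
qed

lemma topspace_RP2: "topspace RP2 = (\<lambda>x. {x, - x}) ` sphere 0 1"
  by (simp add: RP2_def topspace_quotient_topology)

lemma compact_space_RP2: "compact_space RP2"
proof -
  have "compactin RP2 ((\<lambda>x. {x, - x}) ` sphere 0 1)"
    unfolding RP2_def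
    by (rule image_compactin[OF _ continuous_map_quotient_topology])
       (simp add: compactin_subtopology compact_sphere)
  then show ?thesis
    by (simp add: compact_space_def topspace_RP2)
qed

definition RP2_to_S :: "(real^3) set \<Rightarrow> quad set" where
  "RP2_to_S C = S_param (SOME x. x \<in> C)"

lemma RP2_to_S_antipodal_pair: "RP2_to_S {x, - x} = S_param x"
proof -
  have "(SOME y. y \<in> {x, - x}) \<in> {x, - x}"
    by (rule someI[of _ x]) simp
  then show ?thesis
    by (auto simp: RP2_to_S_def S_param_uminus)
qed

lemma homeomorphic_map_RP2_to_S: "homeomorphic_map RP2 (subtopology M_top S_sub) RP2_to_S"
proof (rule continuous_imp_homeomorphic_map[OF _ compact_space_RP2 Hausdorff_space_S_sub])
  show "continuous_map RP2 (subtopology M_top S_sub) RP2_to_S"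
    unfolding RP2_def
    by (rule continuous_map_from_quotient_topology)
       (simp add: RP2_to_S_antipodal_pair continuous_map_S_param)
  show "RP2_to_S ` topspace RP2 = topspace (subtopology M_top S_sub)"
    unfolding topspace_RP2 topspace_subtopology_S_sub image_image
    by (simp add: RP2_to_S_antipodal_pair S_sub_eq_image_S_param)
  show "inj_on RP2_to_S (topspace RP2)"
    unfolding topspace_RP2
    by (rule inj_onI) (auto simp: RP2_to_S_antipodal_pair S_param_eq_iff)
qed

theorem mainTheorem13:
  shows "subtopology M_top S_sub homeomorphic_space RP2"
  using homeomorphic_map_RP2_to_S homeomorphic_space homeomorphic_space_sym by blast

end
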